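(* For integers $\alpha\geq 3$, $\beta\geq 9$, $\rho\geq 4$, let $k_\alpha=2^{2\alpha}+2^\alpha+2$, $K_\beta=2^{2\beta+1}+3\cdot 2^{\beta+3}+49$, $\kappa_\rho=2^\rho+2$, and let $\chi(\rho)=1$ if $\rho$ is even and $\chi(\rho)=2$ if $\rho$ is odd. Then $\Gamma(k_\alpha)\geq 3\cdot 2^{2\alpha}-2^\alpha+1$, $\Gamma(K_\beta)\geq 3\cdot 2^{2\beta+1}-2^{\beta-1}+1$, and $\Gamma(\kappa_\rho)\geq 5\cdot 2^{\rho-1}-8\chi(\rho)+1$.
   Context: The Thue–Morse word is $\mathbf t=\mathbf t_1\mathbf t_2\cdots$ where $\mathbf t_i\in\{0,1\}$ has the parity of the number of $1$'s in the binary expansion of $i-1$. For positive integers $\alpha\le\beta$, $\langle\alpha,\beta\rangle=\mathbf t_\alpha\cdots\mathbf t_\beta$. A $k$-anti-power is a word $w_1\cdots w_k$ with $w_1,\dots,w_k$ pairwise distinct words of equal length. $\mathcal F(k)$ is the set of odd positive integers $m$ such that $\langle 1,km\rangle$ is a $k$-anti-power. $\Gamma(k)=\sup\big((2\mathbb Z^+-1)\setminus\mathcal F(k)\big)$. *)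

theory Defs
  imports Main "HOL-Library.Extended_Nat"
begin

fun bitcount :: "nat \<Rightarrow> nat" where
  "bitcount n = (if n = 0 then 0 else n mod 2 + bitcount (n div 2))"

declare bitcount.simps[simp del]

text \<open>Thue--Morse word, 1-indexed: t i = parity of bitcount (i-1), for i \<ge> 1.\<close>
definition tm :: "nat \<Rightarrow> nat" where
  "tm i = bitcount (i - 1) mod 2"

definition tm_factor :: "nat \<Rightarrow> nat \<Rightarrow> nat list" where
  "tm_factor a b = map tm [a..<Suc b]"

definition anti_power :: "nat \<Rightarrow> 'a list \<Rightarrow> bool" where
  "anti_power k w \<longleftrightarrow> (\<exists>n. length w = k * n \<and>
      distinct (map (\<lambda>i. take n (drop (i * n) w)) [0..<k]))"

definition F_set :: "nat \<Rightarrow> nat set" where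
  "F_set k = {m. odd m \<and> 0 < m \<and> anti_power k (tm_factor 1 (k * m))}"

definition Gamma :: "nat \<Rightarrow> enat" where
  "Gamma k = Sup (enat ` {m. odd m \<and> 0 < m \<and> m \<notin> F_set k})"

end

theory Submission
  imports Defs
begin

text \<open>
  Position \<open>p\<close> of \<open>\<langle>1, km\<rangle>\<close> (counted from 0) carries the parity of the number of ones of
  \<open>p\<close>. Adding \<open>2^s m\<close> to \<open>p\<close> keeps its low \<open>s\<close> binary digits and adds \<open>m\<close> to its
  high part \<open>p div 2^s\<close>. Hence blocks \<open>i\<close> and \<open>i + 2^s\<close> of length \<open>m\<close> coincide, and
  \<open>m \<notin> F(k)\<close>, as soon as adding \<open>m\<close> preserves the parity of the bitcount of each of the
  few consecutive high parts \<open>q, q + 1, q + 2\<close> met inside block \<open>i\<close>. For each of the three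
  families, \<open>i\<close>, \<open>s\<close> and \<open>q\<close> are chosen so that \<open>q + e\<close> and \<open>q + e + m\<close> are written with a
  handful of explicit binary digit groups, and the parity check reduces to the values of the
  bitcount at \<open>2, \<dots>, 5\<close> and \<open>46, \<dots>, 49\<close>.
\<close>

lemma bitcount_rec: "bitcount n = n mod 2 + bitcount (n div 2)"
  by (cases "n = 0") (simp_all add: bitcount.simps[of n] bitcount.simps[of 0])

lemma bitcount_pow2_mult_add:
  "b < 2^s \<Longrightarrow> bitcount (2^s * a + b) = bitcount a + bitcount b"
proof (induction s arbitrary: b)
  case 0
  then show ?case by (simp add: bitcount.simps[of 0])
next
  case (Suc s)
  have "bitcount (2^s * a + b div 2) = bitcount a + bitcount (b div 2)"
    using Suc by simp
  then show ?case
    using bitcount_rec[of "2^Suc s * a + b"] bitcount_rec[of b] by (simp add: mult.assoc)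
qed

lemma bitcount_add_pow2_mult:
  "bitcount (n + 2^s * m) = bitcount (n div 2^s + m) + bitcount (n mod 2^s)"
proof -
  have "n + 2^s * m = 2^s * (n div 2^s + m) + n mod 2^s"
    by (simp add: algebra_simps)
  then show ?thesis by (simp add: bitcount_pow2_mult_add)
qed

lemma bitcount_pow2_minus_1: "bitcount (2^s - 1) = s"
proof (induction s)
  case 0
  then show ?case by (simp add: bitcount.simps[of 0])
next
  case (Suc s)
  have "(2::nat)^Suc s - 1 = 2^s * 1 + (2^s - 1)" by simp
  then show ?case
    using Suc bitcount_pow2_mult_add[of "2^s - 1" s 1] by (simp add: bitcount.simps)
qed

lemma bitcount_numerals:
  "bitcount 1 = 1" "bitcount 2 = 1" "bitcount 3 = 2" "bitcount 4 = 1" "bitcount 5 = 2"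
  "bitcount 46 = 4" "bitcount 47 = 5" "bitcount 48 = 2" "bitcount 49 = 3"
  by (simp_all add: bitcount.simps)

lemma bitcount_parity_flips:
  assumes "e < 3"
  shows "odd (bitcount (3 + e) + bitcount (2 + e))"
    and "odd (bitcount (47 + e) + bitcount (46 + e))"
proof -
  have "e = 0 \<or> e = 1 \<or> e = 2" using assms by arith
  then show "odd (bitcount (3 + e) + bitcount (2 + e))"
    and "odd (bitcount (47 + e) + bitcount (46 + e))"
    by (elim disjE; simp add: bitcount_numerals)+
qed

lemma length_tm_factor: "length (tm_factor a b) = Suc b - a"
  by (simp add: tm_factor_def Suc_diff_le)

lemma tm_factor_1_eq: "tm_factor 1 n = map (\<lambda>p. bitcount p mod 2) [0..<n]"
  unfolding tm_factor_def tm_def by (rule nth_equalityI) (simp_all del: upt_Suc)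

lemma not_anti_power_if_equal_blocks:
  assumes "length w = k * m" "i < j" "j < k"
    and "take m (drop (i * m) w) = take m (drop (j * m) w)"
  shows "\<not> anti_power k w"
proof
  assume "anti_power k w"
  then obtain n where "length w = k * n"
    and "distinct (map (\<lambda>i. take n (drop (i * n) w)) [0..<k])"
    unfolding anti_power_def by blast
  moreover have "n = m" using assms(1,3) \<open>length w = k * n\<close> by simp
  ultimately have "inj_on (\<lambda>i. take m (drop (i * m) w)) {0..<k}"
    by (simp add: distinct_map)
  then have "i = j" using assms(2-4) by (auto dest: inj_onD)
  then show False using \<open>i < j\<close> by simp
qed

lemma Gamma_ge_if_not_anti_power:
  assumes "odd m" "\<not> anti_power k (tm_factor 1 (k * m))"
  shows "enat m \<le> Gamma k"
proof -
  have "m \<in> {m. odd m \<and> 0 < m \<and> m \<notin> F_set k}"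
    using assms by (auto simp: F_set_def intro: odd_pos)
  then show ?thesis unfolding Gamma_def by (intro Sup_upper imageI)
qed

lemma tm_factor_block:
  assumes "a < k"
  shows "take m (drop (a * m) (tm_factor 1 (k * m))) =
    map (\<lambda>x. bitcount (a * m + x) mod 2) [0..<m]"
proof -
  have "a * m + m \<le> k * m"
    using mult_le_mono1[of "Suc a" k m] assms by simp
  then show ?thesis
    unfolding tm_factor_1_eq by (simp add: take_map drop_map map_add_upt[symmetric] add.commute)
qed

lemma Gamma_ge_if_shift_invariant:
  assumes "odd m" "i + 2^s < k"
    and "q * 2^s \<le> i * m" "i * m + m \<le> (q + r) * 2^s"
    and "\<And>e. e < r \<Longrightarrow> bitcount (q + e + m) mod 2 = bitcount (q + e) mod 2"
  shows "enat m \<le> Gamma k"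
proof -
  have "bitcount ((i + 2^s) * m + x) mod 2 = bitcount (i * m + x) mod 2" if "x < m" for x
  proof -
    define n where "n = i * m + x"
    have "q \<le> n div 2^s" "n div 2^s < q + r"
      using assms(3,4) \<open>x < m\<close>
      by (simp_all add: n_def less_eq_div_iff_mult_less_eq div_less_iff_less_mult)
    then obtain e where "e < r" and e: "n div 2^s = q + e"
      by (intro that[of "n div 2^s - q"]) simp_all
    have "bitcount (n + 2^s * m) = bitcount (q + e + m) + bitcount (n mod 2^s)"
      using bitcount_add_pow2_mult[of n s m] unfolding e .
    moreover have "bitcount n = bitcount (q + e) + bitcount (n mod 2^s)"
      using bitcount_add_pow2_mult[of n s 0] unfolding e by simp
    ultimately have "bitcount (n + 2^s * m) mod 2 = bitcount n mod 2"
      using mod_add_cong[OF assms(5)[OF \<open>e < r\<close>] refl] by presburger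
    then show ?thesis by (simp add: n_def algebra_simps)
  qed
  moreover have "i < k" using assms(2) by simp
  ultimately have "take m (drop (i * m) (tm_factor 1 (k * m))) =
      take m (drop ((i + 2^s) * m) (tm_factor 1 (k * m)))"
    unfolding tm_factor_block[OF \<open>i < k\<close>] tm_factor_block[OF assms(2)] by simp
  then have "\<not> anti_power k (tm_factor 1 (k * m))"
    using assms(2) by (intro not_anti_power_if_equal_blocks[of _ k m i "i + 2^s"])
      (simp_all add: length_tm_factor)
  then show ?thesis by (rule Gamma_ge_if_not_anti_power[OF assms(1)])
qed

lemma Gamma_k_alpha_ge:
  assumes "3 \<le> \<alpha>"
  shows "enat (3 * 2^(2*\<alpha>) - 2^\<alpha> + 1) \<le> Gamma (2^(2*\<alpha>) + 2^\<alpha> + 2)"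
proof -
  define N :: nat where "N = 2^\<alpha>"
  define m where "m = 3 * N\<^sup>2 - N + 1"
  have "(2::nat)^3 \<le> 2^\<alpha>" using assms by (rule power_increasing) simp
  then have "8 \<le> N" by (simp add: N_def)
  have sq: "2^(2*\<alpha>) = N\<^sup>2" by (simp add: N_def power_mult[symmetric] mult.commute)
  have "N \<le> N\<^sup>2" by (simp add: power2_eq_square)
  then have m_N: "m + N = 3 * N\<^sup>2 + 1" by (simp add: m_def)
  have "(N + 1) * (m + N) = (N + 1) * (3 * N\<^sup>2 + 1)" using m_N by simp
  then have block: "(N + 1) * m = 3 * N^3 + 2 * N\<^sup>2 + 1"
    by (simp add: algebra_simps power2_eq_square power3_eq_cube)
  have "enat m \<le> Gamma (N\<^sup>2 + N + 2)"
  proof (rule Gamma_ge_if_shift_invariant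
      [where i = "N + 1" and s = "2 * \<alpha>" and q = "3 * N + 2" and r = 3])
    have "even N" using assms by (simp add: N_def)
    moreover from this have "odd (m + N)" unfolding m_N by simp
    ultimately show "odd m" by simp
    show "N + 1 + 2^(2*\<alpha>) < N\<^sup>2 + N + 2" by (simp add: sq)
    show "(3 * N + 2) * 2^(2*\<alpha>) \<le> (N + 1) * m"
      unfolding sq block by (simp add: algebra_simps power2_eq_square power3_eq_cube)
    show "(N + 1) * m + m \<le> (3 * N + 2 + 3) * 2^(2*\<alpha>)"
      using m_N \<open>8 \<le> N\<close> unfolding sq block
      by (simp add: algebra_simps power2_eq_square power3_eq_cube)
    fix e :: nat assume "e < 3"
    have digits: "3 * N + 2 + e + m = 2^(2*\<alpha>) * 3 + (2^\<alpha> * 2 + (3 + e))"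
      using m_N by (simp add: sq N_def)
    have "8 * N \<le> N * N" using \<open>8 \<le> N\<close> by simp
    then have "N * 2 + (3 + e) < N * N" using \<open>8 \<le> N\<close> \<open>e < 3\<close> by linarith
    then have "2^\<alpha> * 2 + (3 + e) < 2^(2*\<alpha>)" "3 + e < 2^\<alpha>"
      using \<open>8 \<le> N\<close> \<open>e < 3\<close> by (simp_all add: sq N_def[symmetric] power2_eq_square)
    then have "bitcount (3 * N + 2 + e + m) = 3 + bitcount (3 + e)"
      unfolding digits by (simp add: bitcount_pow2_mult_add bitcount_numerals)
    moreover have "bitcount (3 * N + 2 + e) = 2 + bitcount (2 + e)"
      using bitcount_pow2_mult_add[of "2 + e" \<alpha> 3] \<open>3 + e < 2^\<alpha>\<close>
      by (simp add: N_def bitcount_numerals mult.commute)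
    ultimately show "bitcount (3 * N + 2 + e + m) mod 2 = bitcount (3 * N + 2 + e) mod 2"
      using bitcount_parity_flips(1)[OF \<open>e < 3\<close>] by (simp add: mod2_eq_if)
  qed
  then show ?thesis by (simp add: m_def N_def sq)
qed

lemma Gamma_K_beta_ge:
  assumes "7 \<le> \<beta>"
  shows "enat (3 * 2^(2*\<beta>+1) - 2^(\<beta>-1) + 1) \<le> Gamma (2^(2*\<beta>+1) + 3 * 2^(\<beta>+3) + 49)"
proof -
  define M :: nat where "M = 2^(\<beta>-1)"
  define m where "m = 24 * M\<^sup>2 - M + 1"
  have "(2::nat)^6 \<le> 2^(\<beta>-1)" using assms by (intro power_increasing) simp_all
  then have "64 \<le> M" by (simp add: M_def)
  have big: "2^(2*\<beta>+1) = 8 * M\<^sup>2"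
  proof -
    have "2*\<beta>+1 = 3 + 2*(\<beta>-1)" using assms by simp
    then show ?thesis by (simp add: M_def power_add power_mult[symmetric] mult.commute)
  qed
  have mid: "2^(\<beta>+3) = 16 * M"
  proof -
    have "\<beta>+3 = 4 + (\<beta>-1)" using assms by simp
    then show ?thesis unfolding M_def by (simp only: power_add) simp
  qed
  have "M \<le> M\<^sup>2" by (simp add: power2_eq_square)
  then have m_M: "m + M = 24 * M\<^sup>2 + 1" by (simp add: m_def)
  have "(16 * M + 16) * (m + M) = (16 * M + 16) * (24 * M\<^sup>2 + 1)" using m_M by simp
  then have block: "(16 * M + 16) * m = 384 * M^3 + 368 * M\<^sup>2 + 16"
    by (simp add: algebra_simps power2_eq_square power3_eq_cube)
  have "enat m \<le> Gamma (8 * M\<^sup>2 + 48 * M + 49)"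
  proof (rule Gamma_ge_if_shift_invariant
      [where i = "16 * M + 16" and s = "2*\<beta>+1" and q = "48 * M + 46" and r = 3])
    have "even M" using assms by (simp add: M_def)
    moreover from this have "odd (m + M)" unfolding m_M by simp
    ultimately show "odd m" by simp
    show "16 * M + 16 + 2^(2*\<beta>+1) < 8 * M\<^sup>2 + 48 * M + 49" unfolding big by simp
    show "(48 * M + 46) * 2^(2*\<beta>+1) \<le> (16 * M + 16) * m"
      unfolding big block by (simp add: algebra_simps power2_eq_square power3_eq_cube)
    show "(16 * M + 16) * m + m \<le> (48 * M + 46 + 3) * 2^(2*\<beta>+1)"
      using m_M \<open>64 \<le> M\<close> unfolding big block
      by (simp add: algebra_simps power2_eq_square power3_eq_cube)
    fix e :: nat assume "e < 3"
    have digits: "48 * M + 46 + e + m = 2^(2*\<beta>+1) * 3 + (2^(\<beta>-1) * 47 + (47 + e))"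
      using m_M unfolding big M_def[symmetric] by simp
    have "64 * M \<le> M * M" using \<open>64 \<le> M\<close> by simp
    then have "M * 47 + (47 + e) < 8 * (M * M)" using \<open>64 \<le> M\<close> \<open>e < 3\<close> by linarith
    then have "2^(\<beta>-1) * 47 + (47 + e) < 2^(2*\<beta>+1)" "47 + e < 2^(\<beta>-1)"
      using \<open>64 \<le> M\<close> \<open>e < 3\<close> unfolding big M_def[symmetric] by (simp_all add: power2_eq_square)
    then have "bitcount (48 * M + 46 + e + m) = bitcount 3 + (bitcount 47 + bitcount (47 + e))"
      unfolding digits by (simp only: bitcount_pow2_mult_add)
    then have "bitcount (48 * M + 46 + e + m) = 7 + bitcount (47 + e)"
      by (simp add: bitcount_numerals)
    moreover have "48 * M + 46 + e = 2^(\<beta>+3) * 3 + (46 + e)" "46 + e < 2^(\<beta>+3)"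
      using \<open>64 \<le> M\<close> \<open>e < 3\<close> unfolding mid by simp_all
    then have "bitcount (48 * M + 46 + e) = bitcount 3 + bitcount (46 + e)"
      by (simp only: bitcount_pow2_mult_add)
    then have "bitcount (48 * M + 46 + e) = 2 + bitcount (46 + e)"
      by (simp add: bitcount_numerals)
    ultimately show "bitcount (48 * M + 46 + e + m) mod 2 = bitcount (48 * M + 46 + e) mod 2"
      using bitcount_parity_flips(2)[OF \<open>e < 3\<close>] by (simp add: mod2_eq_if)
  qed
  then show ?thesis unfolding big mid M_def[symmetric] by (simp add: m_def)
qed

lemma Gamma_kappa_ge:
  assumes "3 \<le> c" "even d"
  shows "enat (5 * 2^(c + d) - 2^c + 1) \<le> Gamma (2^(c + d + 1) + 2)"
proof -
  define D :: nat where "D = 2^(c + d)"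
  define m where "m = 5 * D - 2^c + 1"
  have "(2::nat)^3 \<le> 2^c" using assms(1) by (rule power_increasing) simp
  have "(2::nat)^c \<le> D" unfolding D_def by (rule power_increasing) simp_all
  then have m_c: "m + 2^c = 5 * D + 1" by (simp add: m_def)
  have "enat m \<le> Gamma (2^(c + d + 1) + 2)"
  proof (rule Gamma_ge_if_shift_invariant
      [where i = 1 and s = "c + d + 1" and q = 2 and r = 3])
    have "even ((2::nat)^c)" "even D" using assms(1) by (simp_all add: D_def)
    moreover from this have "odd (m + 2^c)" unfolding m_c by simp
    ultimately show "odd m" by simp
    show "1 + 2^(c + d + 1) < 2^(c + d + 1) + (2::nat)" by simp
    have "2^(c + d + 1) = 2 * D" by (simp add: D_def)
    then show "2 * 2^(c + d + 1) \<le> 1 * m" "1 * m + m \<le> (2 + 3) * 2^(c + d + 1)"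
      using m_c \<open>2^c \<le> D\<close> \<open>2^3 \<le> 2^c\<close> by simp_all
    fix e :: nat assume "e < 3"
    have "2^c * (2^d - 1) = D - 2^c" by (simp add: D_def power_add diff_mult_distrib2)
    moreover have "2^(c + d + 2) = 4 * D" by (simp add: D_def)
    ultimately have digits: "2 + e + m = 2^(c + d + 2) * 1 + (2^c * (2^d - 1) + (3 + e))"
      and "2^c * (2^d - 1) + (3 + e) < 2^(c + d + 2)" "3 + e < 2^c"
      using m_c \<open>2^c \<le> D\<close> \<open>2^3 \<le> 2^c\<close> \<open>e < 3\<close> by simp_all
    then have "bitcount (2 + e + m) = bitcount 1 + (bitcount (2^d - 1) + bitcount (3 + e))"
      unfolding digits by (simp only: bitcount_pow2_mult_add)
    then have "bitcount (2 + e + m) = 1 + d + bitcount (3 + e)"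
      unfolding bitcount_pow2_minus_1 bitcount_numerals(1) by simp
    then show "bitcount (2 + e + m) mod 2 = bitcount (2 + e) mod 2"
      using bitcount_parity_flips(1)[OF \<open>e < 3\<close>] assms(2) by (simp add: mod2_eq_if)
  qed
  then show ?thesis by (simp add: m_def D_def)
qed

(* \<open>8 \<chi>(\<rho>)\<close> is the power \<open>2^c\<close>, \<open>c \<in> {3, 4}\<close>, for which \<open>\<rho> - 1 - c\<close> is even. *)
lemma Gamma_kappa_rho_ge:
  assumes "4 \<le> \<rho>"
  shows "enat (5 * 2^(\<rho>-1) - 8 * (if even \<rho> then 1 else 2) + 1) \<le> Gamma (2^\<rho> + 2)"
proof (cases "even \<rho>")
  case True
  then have "even (\<rho> - 4)" "3 + (\<rho> - 4) = \<rho> - 1" "3 + (\<rho> - 4) + 1 = \<rho>"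
    using assms by simp_all
  then show ?thesis using True Gamma_kappa_ge[of 3 "\<rho> - 4"] by simp
next
  case False
  then have "even (\<rho> - 5)" "4 + (\<rho> - 5) = \<rho> - 1" "4 + (\<rho> - 5) + 1 = \<rho>"
    using assms by presburger+
  then show ?thesis using False Gamma_kappa_ge[of 4 "\<rho> - 5"] by simp
qed

theorem lemma2:
  fixes \<alpha> \<beta> \<rho> :: nat
  assumes "\<alpha> \<ge> 3" and "\<beta> \<ge> 9" and "\<rho> \<ge> 4"
  shows "Gamma (2^(2*\<alpha>) + 2^\<alpha> + 2) \<ge> enat (3 * 2^(2*\<alpha>) - 2^\<alpha> + 1) \<and>
         Gamma (2^(2*\<beta>+1) + 3 * 2^(\<beta>+3) + 49) \<ge> enat (3 * 2^(2*\<beta>+1) - 2^(\<beta>-1) + 1) \<and>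
         Gamma (2^\<rho> + 2) \<ge> enat (5 * 2^(\<rho>-1) - 8 * (if even \<rho> then 1 else 2) + 1)"
  using Gamma_k_alpha_ge[OF assms(1)] Gamma_K_beta_ge[of \<beta>] Gamma_kappa_rho_ge[OF assms(3)] assms(2)
  by simp

end
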